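(* Suppose $\gamma$ is oriented counterclockwise and $L_\gamma$ is Hamiltonian stationary, with nonzero constant $c$ such that $\frac{\dot w v-w\dot v+2w(v^2+w^2)}{(v^2+w^2)^{3/2}}=c$ for all $\beta$. Then $$u^*:=\int_0^{2\pi}\sqrt{v^2+w^2}\,d\beta=\frac{2(k+1)\pi}{c},$$ where $k$ is the winding number of $\gamma$ around the origin (equivalently, $f(\beta+2\pi)=f(\beta)+2k\pi$).
   Context: Let $\gamma:\mathbb{R}/2\pi\mathbb{Z}\to\mathbb{C}\setminus\{0\}$ be a smooth regular simple closed curve written as $\gamma(\beta)=\rho(\beta)e^{if(\beta)}$ with $\rho>0$ smooth and $2\pi$-periodic, $f$ smooth with $f(\beta+2\pi)=f(\beta)+2k\pi$, $k\in\mathbb{Z}$; dots denote $d/d\beta$, $v=\dot\rho/\rho$, $w=\dot f$. The twisted torus $L_\gamma\subset\mathbb{C}^2$ is the image of $F(\alpha,\beta)=\frac{\rho(\beta)}{\sqrt2}\left(e^{i(f(\beta)+\alpha)},e^{i(f(\beta)-\alpha)}\right)$. Hamiltonian stationary means critical for area under all variations with field $J\nabla h$ (equivalently $\mathrm{div}_g(JH)=0$, $g$ the induced metric, $H$ the mean curvature vector, $J$ multiplication by $i$). *)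

theory Defs
  imports "HOL-Complex_Analysis.Complex_Analysis"
begin

definition smooth_fun :: "(real \<Rightarrow> real) \<Rightarrow> bool" where
  "smooth_fun g \<longleftrightarrow> (\<forall>n x. ((deriv ^^ n) g) differentiable (at x))"

text \<open>Partial derivative of a two-variable map: True = first variable (alpha),
  False = second variable (beta).\<close>
definition pd :: "bool \<Rightarrow> (real \<Rightarrow> real \<Rightarrow> 'a::real_normed_vector) \<Rightarrow> real \<Rightarrow> real \<Rightarrow> 'a" where
  "pd first \<Phi> a b =
     (if first then vector_derivative (\<lambda>s. \<Phi> s b) (at a)
      else vector_derivative (\<lambda>s. \<Phi> a s) (at b))"

definition smooth2 :: "(real \<Rightarrow> real \<Rightarrow> real) \<Rightarrow> bool" where
  "smooth2 h \<longleftrightarrow>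
     (\<forall>ds p. (\<lambda>q::real \<times> real. foldr pd ds h (fst q) (snd q)) differentiable (at p))"

definition periodic2 :: "(real \<Rightarrow> real \<Rightarrow> real) \<Rightarrow> bool" where
  "periodic2 h \<longleftrightarrow> (\<forall>a b. h (a + 2*pi) b = h a b \<and> h a (b + 2*pi) = h a b)"

definition gE :: "(real \<Rightarrow> real \<Rightarrow> complex \<times> complex) \<Rightarrow> real \<Rightarrow> real \<Rightarrow> real" where
  "gE \<Phi> a b = inner (pd True \<Phi> a b) (pd True \<Phi> a b)"
definition gF :: "(real \<Rightarrow> real \<Rightarrow> complex \<times> complex) \<Rightarrow> real \<Rightarrow> real \<Rightarrow> real" where
  "gF \<Phi> a b = inner (pd True \<Phi> a b) (pd False \<Phi> a b)"
definition gG :: "(real \<Rightarrow> real \<Rightarrow> complex \<times> complex) \<Rightarrow> real \<Rightarrow> real \<Rightarrow> real" where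
  "gG \<Phi> a b = inner (pd False \<Phi> a b) (pd False \<Phi> a b)"

definition area :: "(real \<Rightarrow> real \<Rightarrow> complex \<times> complex) \<Rightarrow> real" where
  "area \<Phi> = integral {0..2*pi} (\<lambda>a. integral {0..2*pi} (\<lambda>b.
      sqrt (gE \<Phi> a b * gG \<Phi> a b - (gF \<Phi> a b)\<^sup>2)))"

definition Jmul :: "complex \<times> complex \<Rightarrow> complex \<times> complex" where
  "Jmul x = (\<i> * fst x, \<i> * snd x)"

text \<open>Gradient of h with respect to the induced metric, as a vector in C^2.\<close>
definition grad :: "(real \<Rightarrow> real \<Rightarrow> complex \<times> complex) \<Rightarrow> (real \<Rightarrow> real \<Rightarrow> real)
    \<Rightarrow> real \<Rightarrow> real \<Rightarrow> complex \<times> complex" where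
  "grad \<Phi> h a b =
     (let E = gE \<Phi> a b; Fm = gF \<Phi> a b; G = gG \<Phi> a b;
          ha = pd True h a b; hb = pd False h a b
      in (1 / (E * G - Fm\<^sup>2)) *\<^sub>R
           ((G * ha - Fm * hb) *\<^sub>R pd True \<Phi> a b + (E * hb - Fm * ha) *\<^sub>R pd False \<Phi> a b))"

definition ham_stationary :: "(real \<Rightarrow> real \<Rightarrow> complex \<times> complex) \<Rightarrow> bool" where
  "ham_stationary \<Phi> \<longleftrightarrow>
     (\<forall>h. smooth2 h \<and> periodic2 h \<longrightarrow>
        ((\<lambda>t. area (\<lambda>a b. \<Phi> a b + t *\<^sub>R Jmul (grad \<Phi> h a b))) has_real_derivative 0) (at 0))"

definition curve :: "(real \<Rightarrow> real) \<Rightarrow> (real \<Rightarrow> real) \<Rightarrow> real \<Rightarrow> complex" where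
  "curve \<rho> f \<beta> = complex_of_real (\<rho> \<beta>) * exp (\<i> * complex_of_real (f \<beta>))"

definition curve_path :: "(real \<Rightarrow> real) \<Rightarrow> (real \<Rightarrow> real) \<Rightarrow> real \<Rightarrow> complex" where
  "curve_path \<rho> f t = curve \<rho> f (2 * pi * t)"

definition counterclockwise :: "(real \<Rightarrow> complex) \<Rightarrow> bool" where
  "counterclockwise g \<longleftrightarrow> (\<forall>z \<in> inside (path_image g). winding_number g z = 1)"

definition twisted_torus :: "(real \<Rightarrow> real) \<Rightarrow> (real \<Rightarrow> real) \<Rightarrow> real \<Rightarrow> real \<Rightarrow> complex \<times> complex" where
  "twisted_torus \<rho> f a b =
     (complex_of_real (\<rho> b / sqrt 2) * exp (\<i> * complex_of_real (f b + a)),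
      complex_of_real (\<rho> b / sqrt 2) * exp (\<i> * complex_of_real (f b - a)))"

end

theory Submission
  imports Defs
begin

text \<open>Writing \<gamma>' = (\<rho>' + i \<rho> f') e^(i f), one computes
  Im (\<gamma>''/\<gamma>') + f' = (w' v - w v' + 2 w (v^2 + w^2)) / (v^2 + w^2), so the hypothesis on c
  says that c sqrt (v^2 + w^2) is the derivative of arg \<gamma>' + f. Over one period arg \<gamma>' increases
  by 2\<pi> (Hopf's Umlaufsatz) and f by 2k\<pi>, hence c u* = 2(k+1)\<pi>.

  The Umlaufsatz follows Hopf's secant argument. Start the curve at a lowest point, where the
  tangent is horizontal. If it points right, the tangent loop is homotopic to the secant loop
  t \<mapsto> \<gamma>(t + \<eta>) - \<gamma>(t) for small \<eta>. The secant map (s, h) \<mapsto> \<gamma>(s + h) - \<gamma>(s) does not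
  vanish for 0 < h < 2\<pi>, so within that strip this loop deforms into four segments: chords
  from the lowest point, secants across it, and the negatives of both. Each piece avoids a ray,
  so its winding is a difference of principal logarithms, and the total is 1. If the tangent
  points left, a point just above the lowest point has winding number -1, which
  counterclockwise orientation excludes.\<close>

lemma has_real_derivative_Re:
  "(g has_vector_derivative g') F \<Longrightarrow> ((\<lambda>x. Re (g x)) has_real_derivative Re g') F"
  using bounded_linear.has_vector_derivative[OF bounded_linear_Re]
  by (simp add: has_real_derivative_iff_has_vector_derivative)

lemma has_real_derivative_Im:
  "(g has_vector_derivative g') F \<Longrightarrow> ((\<lambda>x. Im (g x)) has_real_derivative Im g') F"
  using bounded_linear.has_vector_derivative[OF bounded_linear_Im]
  by (simp add: has_real_derivative_iff_has_vector_derivative)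

lemma winding_number_avoiding_ray:
  fixes p :: "real \<Rightarrow> complex"
  assumes "path p" "d \<noteq> 0" "\<And>u. u \<in> {0..1} \<Longrightarrow> d * p u \<notin> \<real>\<^sub>\<le>\<^sub>0"
  shows "winding_number p 0 = (Ln (d * pathfinish p) - Ln (d * pathstart p)) / (2 * of_real pi * \<i>)"
proof -
  define \<phi> where "\<phi> = (\<lambda>u. Ln (d * p u) - Ln d)"
  have "continuous_on {0..1} p" using assms(1) unfolding path_def .
  then have "continuous_on {0..1} \<phi>"
    unfolding \<phi>_def using assms(3) by (intro continuous_intros) auto
  then have "path \<phi>" by (simp add: path_def)
  have "winding_number p 0 = winding_number (exp \<circ> \<phi>) 0"
  proof (rule winding_number_cong)
    fix t :: real assume "0 \<le> t" "t \<le> 1"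
    then have "d * p t \<noteq> 0" using assms(3) by fastforce
    then show "p t = (exp \<circ> \<phi>) t" using assms(2) by (simp add: \<phi>_def exp_diff)
  qed
  also have "\<dots> = (\<phi> 1 - \<phi> 0) / (2 * of_real pi * \<i>)"
    using winding_number_compose_exp[OF \<open>path \<phi>\<close>] by (simp add: pathstart_def pathfinish_def)
  finally show ?thesis by (simp add: \<phi>_def pathstart_def pathfinish_def)
qed

lemma winding_number_uminus_avoiding_ray:
  fixes p :: "real \<Rightarrow> complex"
  assumes "path p" "d \<noteq> 0" "\<And>u. u \<in> {0..1} \<Longrightarrow> d * p u \<notin> \<real>\<^sub>\<le>\<^sub>0"
  shows "winding_number (\<lambda>u. - p u) 0 = winding_number p 0"
proof -
  have "path (\<lambda>u. - p u)"
    using assms(1) unfolding path_def by (intro continuous_intros)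
  then show ?thesis
    using winding_number_avoiding_ray[of "\<lambda>u. - p u" "- d"] winding_number_avoiding_ray[OF assms] assms
    by (simp add: pathstart_def pathfinish_def)
qed

lemma Ln_times_ii_Re_pos:
  assumes "0 < Re w"
  shows "Ln (\<i> * w) = Ln w + \<i> * of_real pi / 2"
  using Ln_times_ii[of w] assms by (cases "w = 0") auto

lemma Ln_times_minus_ii_Re_pos:
  assumes "0 < Re w"
  shows "Ln (- \<i> * w) = Ln w - \<i> * of_real pi / 2"
proof (rule Ln_unique)
  have "exp (\<i> * of_real pi / 2) = \<i>"
    using cis_conv_exp[of "pi/2"] by simp
  moreover have "w \<noteq> 0" using assms by auto
  ultimately have "exp (Ln w - \<i> * of_real pi / 2) = w / \<i>"
    by (simp add: exp_diff)
  then show "exp (Ln w - \<i> * of_real pi / 2) = - \<i> * w"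
    by simp
  show "- pi < Im (Ln w - \<i> * of_real pi / 2)" "Im (Ln w - \<i> * of_real pi / 2) \<le> pi"
    using Re_Ln_pos_lt_imp[OF assms] by auto
qed

lemma winding_number_image_of_convex_paths:
  fixes G :: "'a::real_normed_vector \<Rightarrow> complex"
  assumes "convex T" "continuous_on T G" "\<And>x. x \<in> T \<Longrightarrow> G x \<noteq> 0"
    and "path p" "path q" "path_image p \<subseteq> T" "path_image q \<subseteq> T"
    and "pathstart q = pathstart p" "pathfinish q = pathfinish p"
  shows "winding_number (G \<circ> p) 0 = winding_number (G \<circ> q) 0"
proof -
  have "homotopic_paths T p q"
  proof (rule homotopic_paths_linear)
    fix t :: real assume "t \<in> {0..1}"
    then show "closed_segment (p t) (q t) \<subseteq> T"
      using assms(1,6,7) by (intro closed_segment_subset) (auto simp: path_image_def)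
  qed (use assms in auto)
  then have "homotopic_paths (-{0}) (G \<circ> p) (G \<circ> q)"
    by (rule homotopic_paths_continuous_image) (use assms(2,3) in auto)
  then show ?thesis by (rule winding_number_homotopic_paths)
qed

lemma winding_number_linepath_split:
  fixes G :: "real \<Rightarrow> complex"
  assumes "a \<le> c" "c \<le> b" "continuous_on {a..b} G" "\<And>t. t \<in> {a..b} \<Longrightarrow> G t \<noteq> 0"
  shows "winding_number (G \<circ> linepath a b) 0
    = winding_number (G \<circ> linepath a c) 0 + winding_number (G \<circ> linepath c b) 0"
proof -
  have "path_image (linepath a c) \<subseteq> {a..b}" "path_image (linepath c b) \<subseteq> {a..b}"
    using assms(1,2) by (auto simp: closed_segment_eq_real_ivl)
  then have "path (G \<circ> linepath a c)" "path (G \<circ> linepath c b)"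
    "0 \<notin> path_image (G \<circ> linepath a c)" "0 \<notin> path_image (G \<circ> linepath c b)"
    using assms(3,4) continuous_on_subset[OF assms(3)]
    by (auto intro!: path_continuous_image simp: path_image_compose)
  moreover have "winding_number (G \<circ> linepath a b) 0 = winding_number (G \<circ> (linepath a c +++ linepath c b)) 0"
    using assms \<open>path_image (linepath a c) \<subseteq> {a..b}\<close> \<open>path_image (linepath c b) \<subseteq> {a..b}\<close>
    by (intro winding_number_image_of_convex_paths subset_path_image_join)
      (auto simp: closed_segment_eq_real_ivl)
  ultimately show ?thesis
    unfolding path_compose_join by (simp add: winding_number_join pathfinish_compose pathstart_compose)
qed

lemma counterclockwise_winding_number_ne_minus_one:
  assumes "path p" "pathfinish p = pathstart p" "counterclockwise p" "z \<notin> path_image p"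
  shows "winding_number p z \<noteq> -1"
proof
  assume minus_one: "winding_number p z = -1"
  then have "z \<notin> outside (path_image p)"
    using winding_number_zero_in_outside[OF assms(1,2)] by force
  then have "z \<in> inside (path_image p)"
    using assms(4) inside_Un_outside by blast
  then show False
    using assms(3) minus_one unfolding counterclockwise_def by force
qed

lemma periodic_add_of_int_mult:
  fixes F :: "real \<Rightarrow> 'a"
  assumes "\<And>x. F (x + p) = F x"
  shows "F (x + of_int n * p) = F x"
proof -
  have nat: "F (y + real m * p) = F y" for y m
  proof (induction m)
    case (Suc m)
    have "F (y + real (Suc m) * p) = F ((y + real m * p) + p)" by (simp add: algebra_simps)
    then show ?case using assms Suc by simp
  qed simp
  show ?thesis
  proof (cases "n \<ge> 0")
    case True
    then show ?thesis using nat[of x "nat n"] by simp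
  next
    case False
    then show ?thesis using nat[of "x + of_int n * p" "nat (-n)"] by simp
  qed
qed

lemma periodic_reduce:
  fixes F :: "real \<Rightarrow> 'a"
  assumes "\<And>x. F (x + p) = F x" "p > 0"
  obtains y n where "a \<le> y" "y < a + p" "F x = F y" "x = y + of_int n * p"
proof -
  define n where "n = \<lfloor>(x - a) / p\<rfloor>"
  have "of_int n * p \<le> x - a" "x - a < (of_int n + 1) * p"
    using floor_divide_lower[OF assms(2)] floor_divide_upper[OF assms(2)] unfolding n_def by auto
  moreover have "F x = F (x - of_int n * p)"
    using periodic_add_of_int_mult[where F=F and p=p, OF assms(1), of "x - of_int n * p" n] by simp
  ultimately show thesis
    by (intro that[of "x - of_int n * p" n]) (simp_all add: algebra_simps)
qed

lemma deriv_shift_quasiperiodic: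
  fixes F :: "real \<Rightarrow> real"
  assumes "\<And>x. F (x + p) = F x + C" "\<And>x. F differentiable (at x)"
  shows "deriv F (x + p) = deriv F x"
proof (rule DERIV_unique)
  have "(F has_real_derivative deriv F (x + p)) (at (x + p))"
    using assms(2) DERIV_deriv_iff_real_differentiable by blast
  then show "((\<lambda>y. F y + C) has_real_derivative deriv F (x + p)) (at x)"
    using assms(1) by (simp add: DERIV_shift)
  have "(F has_real_derivative deriv F x) (at x)"
    using assms(2) DERIV_deriv_iff_real_differentiable by blast
  then show "((\<lambda>y. F y + C) has_real_derivative deriv F x) (at x)"
    using DERIV_add[OF _ DERIV_const[of C]] by simp
qed

lemma strictly_increasing_near_positive_derivative:
  fixes r r' :: "real \<Rightarrow> real"
  assumes "\<And>x. (r has_real_derivative r' x) (at x)" "isCont r' a" "r' a > 0"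
  obtains \<eta> where "\<eta> > 0" "\<And>s t. a - \<eta> \<le> s \<Longrightarrow> s < t \<Longrightarrow> t \<le> a + \<eta> \<Longrightarrow> r s < r t"
proof -
  have "\<forall>\<^sub>F x in at a. 0 < r' x"
    using order_tendstoD(1)[OF assms(2)[unfolded isCont_def] assms(3)] .
  then obtain d where "d > 0" and d: "\<And>x. x \<noteq> a \<Longrightarrow> dist x a < d \<Longrightarrow> 0 < r' x"
    unfolding eventually_at by blast
  have pos: "0 < r' x" if "\<bar>x - a\<bar> \<le> d/2" for x
    using d[of x] that \<open>d > 0\<close> assms(3) by (cases "x = a") (auto simp: dist_real_def)
  show thesis
  proof
    fix s t assume "a - d/2 \<le> s" "s < t" "t \<le> a + d/2"
    show "r s < r t"
    proof (rule DERIV_pos_imp_increasing[OF \<open>s < t\<close>])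
      fix x assume "s \<le> x" "x \<le> t"
      then have "\<bar>x - a\<bar> \<le> d/2"
        using \<open>a - d/2 \<le> s\<close> \<open>t \<le> a + d/2\<close> by linarith
      then show "\<exists>y. (r has_real_derivative y) (at x) \<and> 0 < y"
        using pos assms(1) by blast
    qed
  qed (use \<open>d > 0\<close> in auto)
qed

lemma exp_lift_of_derivative:
  fixes F F' :: "real \<Rightarrow> complex"
  assumes ab: "a \<le> b"
    and der: "\<And>t. t \<in> {a..b} \<Longrightarrow> (F has_vector_derivative F' t) (at t within {a..b})"
    and cont: "continuous_on {a..b} F'"
    and nz: "\<And>t. t \<in> {a..b} \<Longrightarrow> F t \<noteq> 0"
  obtains \<Lambda> where "\<And>t. t \<in> {a..b} \<Longrightarrow> (\<Lambda> has_vector_derivative F' t / F t) (at t within {a..b})"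
    "\<And>t. t \<in> {a..b} \<Longrightarrow> exp (\<Lambda> t) = F t"
proof -
  have "continuous_on {a..b} F"
    using der by (meson continuous_on_eq_continuous_within has_vector_derivative_continuous)
  then have hc: "continuous_on {a..b} (\<lambda>t. F' t / F t)"
    using cont nz by (intro continuous_intros) auto
  define \<Lambda> where "\<Lambda> t = Ln (F a) + integral {a..t} (\<lambda>t. F' t / F t)" for t
  have d\<Lambda>: "(\<Lambda> has_vector_derivative F' t / F t) (at t within {a..b})" if "t \<in> {a..b}" for t
    using has_vector_derivative_add[OF has_vector_derivative_const integral_has_vector_derivative[OF hc that]]
    unfolding \<Lambda>_def by simp
  define D where "D t = F t * exp (- \<Lambda> t)" for t
  have "(D has_derivative (\<lambda>h. 0)) (at t within {a..b})" if t: "t \<in> {a..b}" for t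
  proof -
    have "((\<lambda>t. exp (- \<Lambda> t)) has_vector_derivative (- (F' t / F t)) * exp (- \<Lambda> t)) (at t within {a..b})"
      using field_vector_diff_chain_within[OF has_vector_derivative_minus[OF d\<Lambda>[OF t]], of exp]
      by (simp add: o_def DERIV_exp has_field_derivative_at_within)
    from has_vector_derivative_mult[OF der[OF t] this]
    have "(D has_vector_derivative 0) (at t within {a..b})"
      using nz[OF t] by (simp add: D_def[abs_def] field_simps)
    then show ?thesis by (simp add: has_vector_derivative_def)
  qed
  then obtain C where C: "\<And>t. t \<in> {a..b} \<Longrightarrow> D t = C"
    using has_derivative_zero_constant[of "{a..b}" D] by auto
  have "D a = 1" using nz[of a] ab by (simp add: D_def \<Lambda>_def exp_minus exp_Ln)
  then have "F t * exp (- \<Lambda> t) = 1" if "t \<in> {a..b}" for t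
    using C[OF that] C[of a] ab by (simp add: D_def)
  then show thesis
    using d\<Lambda> by (intro that) (auto simp: exp_minus field_simps)
qed

lemma log_derivative_has_integral_winding_number:
  fixes F F' :: "real \<Rightarrow> complex"
  assumes "a \<le> b"
    and "\<And>t. t \<in> {a..b} \<Longrightarrow> (F has_vector_derivative F' t) (at t within {a..b})"
    and "continuous_on {a..b} F'"
    and "\<And>t. t \<in> {a..b} \<Longrightarrow> F t \<noteq> 0"
  shows "((\<lambda>t. F' t / F t) has_integral 2 * of_real pi * \<i> * winding_number (F \<circ> linepath a b) 0) {a..b}"
proof -
  obtain \<Lambda> where d\<Lambda>: "\<And>t. t \<in> {a..b} \<Longrightarrow> (\<Lambda> has_vector_derivative F' t / F t) (at t within {a..b})"
    and exp\<Lambda>: "\<And>t. t \<in> {a..b} \<Longrightarrow> exp (\<Lambda> t) = F t"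
    using exp_lift_of_derivative[OF assms] by blast
  have "continuous_on {a..b} \<Lambda>"
    using d\<Lambda> by (meson continuous_on_eq_continuous_within has_vector_derivative_continuous)
  then have "path (\<Lambda> \<circ> linepath a b)"
    using \<open>a \<le> b\<close> by (intro path_continuous_image) (auto simp: closed_segment_eq_real_ivl)
  have seg: "linepath a b u \<in> {a..b}" if "u \<in> {0..1}" for u
    using that \<open>a \<le> b\<close> linepath_in_path[of u a b] by (auto simp: closed_segment_eq_real_ivl)
  have "winding_number (F \<circ> linepath a b) 0 = winding_number (exp \<circ> (\<Lambda> \<circ> linepath a b)) 0"
    by (rule winding_number_cong) (use seg exp\<Lambda> in auto)
  also have "\<dots> = (\<Lambda> b - \<Lambda> a) / (2 * of_real pi * \<i>)"
    using winding_number_compose_exp[OF \<open>path (\<Lambda> \<circ> linepath a b)\<close>]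
    by (simp add: pathstart_compose pathfinish_compose)
  finally have "\<Lambda> b - \<Lambda> a = 2 * of_real pi * \<i> * winding_number (F \<circ> linepath a b) 0"
    by (simp add: field_simps)
  moreover have "((\<lambda>t. F' t / F t) has_integral \<Lambda> b - \<Lambda> a) {a..b}"
    using d\<Lambda> \<open>a \<le> b\<close> by (intro fundamental_theorem_of_calculus) auto
  ultimately show ?thesis by simp
qed

locale bottom_based_loop =
  fixes g g' :: "real \<Rightarrow> complex"
  assumes has_derivative: "\<And>t. (g has_vector_derivative g' t) (at t)"
    and continuous_derivative: "continuous_on UNIV g'"
    and periodic: "\<And>t. g (t + 2*pi) = g t"
    and periodic_derivative: "\<And>t. g' (t + 2*pi) = g' t"
    and regular: "\<And>t. g' t \<noteq> 0"
    and simple: "\<And>s t. g s = g t \<Longrightarrow> \<exists>n::int. s - t = 2*pi*n"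
    and bottom: "\<And>t. Im (g 0) \<le> Im (g t)"
begin

lemma continuous_on_g: "continuous_on S g"
  by (meson continuous_at_imp_continuous_on has_derivative has_vector_derivative_continuous)

lemma continuous_on_g': "continuous_on S g'"
  using continuous_derivative continuous_on_subset by blast

lemma g_shift_ne:
  assumes "0 < h" "h < 2*pi"
  shows "g (s + h) \<noteq> g s"
proof
  assume "g (s + h) = g s"
  then obtain n :: int where "s + h - s = 2*pi*n" using simple by blast
  with assms have "0 < real_of_int n" "real_of_int n < 1"
    by (auto simp: zero_less_mult_iff)
  then have "0 < n" "n < 1" by simp_all
  then show False by simp
qed

lemma chord_from_bottom_avoids_ray:
  assumes "0 < h" "h < 2*pi"
  shows "- \<i> * (g h - g 0) \<notin> \<real>\<^sub>\<le>\<^sub>0"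
proof -
  have "g h - g 0 \<noteq> 0" using g_shift_ne[OF assms, of 0] by simp
  moreover have "Im (g h - g 0) \<ge> 0" using bottom[of h] by simp
  ultimately show ?thesis by (auto simp: complex_nonpos_Reals_iff complex_eq_iff)
qed

lemma Im_g'_0: "Im (g' 0) = 0"
  using has_real_derivative_Im[OF has_derivative]
  by (rule DERIV_local_min[of _ _ _ 1]) (auto simp: bottom)

lemma Re_g'_0_nonzero: "Re (g' 0) \<noteq> 0"
  using Im_g'_0 regular[of 0] complex_eq_iff by force

lemma isCont_Re_g': "isCont (\<lambda>t. Re (g' t)) x"
  using continuous_derivative by (intro isCont_Re) (simp add: continuous_on_eq_continuous_at)

lemma Re_g_increasing_near_0:
  assumes "Re (g' 0) > 0"
  obtains \<eta> where "\<eta> > 0" "\<And>s t. -\<eta> \<le> s \<Longrightarrow> s < t \<Longrightarrow> t \<le> \<eta> \<Longrightarrow> Re (g s) < Re (g t)"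
  using strictly_increasing_near_positive_derivative[of "\<lambda>t. Re (g t)" "\<lambda>t. Re (g' t)" 0]
    has_real_derivative_Re[OF has_derivative] isCont_Re_g' assms
  by auto

lemma Re_g_decreasing_near_0:
  assumes "Re (g' 0) < 0"
  obtains \<eta> where "\<eta> > 0" "\<And>s t. -\<eta> \<le> s \<Longrightarrow> s < t \<Longrightarrow> t \<le> \<eta> \<Longrightarrow> Re (g t) < Re (g s)"
  using strictly_increasing_near_positive_derivative[of "\<lambda>t. - Re (g t)" "\<lambda>t. - Re (g' t)" 0]
    DERIV_minus[OF has_real_derivative_Re[OF has_derivative]] isCont_minus[OF isCont_Re_g'] assms
  by auto

lemma tangent_norm_lower_bound:
  obtains m where "m > 0" "\<And>t. m \<le> norm (g' t)"
proof -
  have "\<exists>x\<in>{0..2*pi}. \<forall>y\<in>{0..2*pi}. norm (g' x) \<le> norm (g' y)"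
    by (intro continuous_attains_inf) (auto intro: continuous_intros continuous_on_g')
  then obtain x where x: "x \<in> {0..2*pi}" "\<And>y. y \<in> {0..2*pi} \<Longrightarrow> norm (g' x) \<le> norm (g' y)"
    by blast
  have "norm (g' x) \<le> norm (g' t)" for t
  proof -
    have "\<exists>y. 0 \<le> y \<and> y < 2*pi \<and> g' t = g' y"
      by (rule periodic_reduce[where F=g' and p="2*pi" and a=0 and x=t])
        (use periodic_derivative in auto)
    then show ?thesis using x(2) by force
  qed
  then show thesis using regular by (intro that[of "norm (g' x)"]) auto
qed

lemma secant_approximates_tangent:
  obtains \<eta>0 where "\<eta>0 > 0" "\<And>\<eta> s. 0 < \<eta> \<Longrightarrow> \<eta> \<le> \<eta>0 \<Longrightarrow> s \<in> {0..2*pi} \<Longrightarrow>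
      norm (g (s + \<eta>) - g s - of_real \<eta> * g' s) < norm (of_real \<eta> * g' s)"
proof -
  obtain m where m: "m > 0" "\<And>t. m \<le> norm (g' t)" using tangent_norm_lower_bound by blast
  have "uniformly_continuous_on {0..2*pi+1} g'"
    using compact_uniformly_continuous[OF continuous_on_g'] by simp
  then obtain d where "d > 0" and d: "\<And>x x'. x \<in> {0..2*pi+1} \<Longrightarrow> x' \<in> {0..2*pi+1} \<Longrightarrow>
      dist x' x < d \<Longrightarrow> dist (g' x') (g' x) < m/2"
    unfolding uniformly_continuous_on_def using m(1) by (metis half_gt_zero)
  show thesis
  proof (rule that[of "min (d/2) 1"])
    fix \<eta> s assume \<eta>: "0 < \<eta>" "\<eta> \<le> min (d/2) 1" and s: "s \<in> {0..2*pi}"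
    define F where "F = (\<lambda>t. g t - of_real t * g' s)"
    have "\<exists>x\<in>{s<..<s+\<eta>}. norm (F (s+\<eta>) - F s) \<le> norm (((s + \<eta>) - s) *\<^sub>R (g' x - g' s))"
    proof (rule mvt_general[where f' = "\<lambda>x h. h *\<^sub>R (g' x - g' s)"])
      show "continuous_on {s..s + \<eta>} F" unfolding F_def using continuous_on_g by (intro continuous_intros)
      fix x
      have "(F has_vector_derivative (g' x - 1 *\<^sub>R g' s)) (at x)"
        unfolding F_def by (intro derivative_eq_intros has_derivative) (auto simp: scaleR_conv_of_real has_derivative)
      then show "(F has_derivative (\<lambda>h. h *\<^sub>R (g' x - g' s))) (at x)"
        by (simp add: has_vector_derivative_def)
    qed (use \<eta> in simp)
    then obtain x where x: "s < x" "x < s + \<eta>" "norm (F (s+\<eta>) - F s) \<le> \<eta> * norm (g' x - g' s)"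
      using \<eta> by auto
    have "dist (g' x) (g' s) < m/2"
      using d[of s x] s x \<eta> by (auto simp: dist_real_def)
    then have "\<eta> * norm (g' x - g' s) < \<eta> * m" using \<eta> m by (simp add: dist_norm)
    also have "\<dots> \<le> norm (of_real \<eta> * g' s)" using \<eta> m(2)[of s] by (simp add: norm_mult)
    finally show "norm (g (s + \<eta>) - g s - of_real \<eta> * g' s) < norm (of_real \<eta> * g' s)"
      using x(3) by (simp add: F_def algebra_simps)
  qed (use \<open>d > 0\<close> in simp)
qed

lemma winding_tangent_eq_winding_secant:
  assumes "0 < \<eta>" "\<eta> < 1"
    and close: "\<And>s. s \<in> {0..2*pi} \<Longrightarrow>
      norm (g (s + \<eta>) - g s - of_real \<eta> * g' s) < norm (of_real \<eta> * g' s)"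
  shows "winding_number (\<lambda>u. g' (2*pi*u)) 0 = winding_number (\<lambda>u. g (2*pi*u + \<eta>) - g (2*pi*u)) 0"
proof -
  define L0 where "L0 = (\<lambda>u. g' (2*pi*u))"
  define L1 where "L1 = (\<lambda>u. of_real \<eta> * g' (2*pi*u))"
  define L2 where "L2 = (\<lambda>u. g (2*pi*u + \<eta>) - g (2*pi*u))"
  have path_L0: "path L0" unfolding L0_def path_def
    by (intro continuous_on_compose2[OF continuous_on_g'] continuous_intros) auto
  have path_L1: "path L1" unfolding L1_def path_def
    by (intro continuous_on_compose2[OF continuous_on_g'] continuous_intros) auto
  have path_L2: "path L2" unfolding L2_def path_def
    by (intro continuous_on_compose2[OF continuous_on_g] continuous_intros) auto
  have loop_L0: "pathfinish L0 = pathstart L0" and loop_L1: "pathfinish L1 = pathstart L1"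
    using periodic_derivative[of 0] by (simp_all add: L0_def L1_def pathfinish_def pathstart_def)
  have loop_L2: "pathfinish L2 = pathstart L2"
    using periodic[of 0] periodic[of \<eta>] by (simp add: L2_def pathfinish_def pathstart_def add.commute)
  have "winding_number L1 0 = winding_number L0 0"
  proof (rule winding_number_nearby_loops_eq[OF path_L0 path_L1 loop_L0 loop_L1])
    fix t :: real
    have "L1 t - L0 t = (\<eta> - 1) *\<^sub>R L0 t"
      by (simp add: L1_def L0_def scaleR_conv_of_real algebra_simps)
    then have "norm (L1 t - L0 t) = (1 - \<eta>) * norm (L0 t)"
      using assms(2) by simp
    also have "\<dots> < norm (L0 t)" using assms(1) regular by (simp add: L0_def)
    finally show "norm (L1 t - L0 t) < norm (L0 t - 0)" by simp
  qed
  moreover have "winding_number L2 0 = winding_number L1 0"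
  proof (rule winding_number_nearby_loops_eq[OF path_L1 path_L2 loop_L1 loop_L2])
    fix t :: real assume "t \<in> {0..1}"
    then show "norm (L2 t - L1 t) < norm (L1 t - 0)"
      using close[of "2*pi*t"] assms(1) by (simp add: L1_def L2_def algebra_simps)
  qed
  ultimately show ?thesis by (simp add: L0_def L2_def)
qed

definition secant :: "real \<times> real \<Rightarrow> complex" where
  "secant x = g (fst x + snd x) - g (fst x)"

lemma continuous_on_secant: "continuous_on T secant"
  unfolding secant_def[abs_def]
  by (intro continuous_on_compose2[OF continuous_on_g] continuous_intros) auto

lemma path_secant_linepath: "path (secant \<circ> linepath a b)"
  by (intro path_continuous_image continuous_on_secant) simp

lemma secant_nonzero: "x \<in> UNIV \<times> {0<..<2*pi} \<Longrightarrow> secant x \<noteq> 0"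
  using g_shift_ne[of "snd x" "fst x"] by (auto simp: secant_def)

lemma secant_reflect: "secant (s + h, 2*pi - h) = - secant (s, h)"
  using periodic[of s] by (simp add: secant_def)

lemma winding_secant_strip_paths_eq:
  assumes "path p" "path q" "path_image p \<subseteq> UNIV \<times> {0<..<2*pi}" "path_image q \<subseteq> UNIV \<times> {0<..<2*pi}"
    and "pathstart q = pathstart p" "pathfinish q = pathfinish p"
  shows "winding_number (secant \<circ> p) 0 = winding_number (secant \<circ> q) 0"
  using assms
  by (intro winding_number_image_of_convex_paths[OF _ continuous_on_secant secant_nonzero])
    (auto intro: convex_Times)

context
  fixes \<eta> :: real
  assumes \<eta>: "0 < \<eta>" "\<eta> < pi"
    and increasing: "\<And>s t. -\<eta> \<le> s \<Longrightarrow> s < t \<Longrightarrow> t \<le> \<eta> \<Longrightarrow> Re (g s) < Re (g t)"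
begin

lemma chord_edge_avoids_ray:
  assumes "u \<in> {0..1}"
  shows "- \<i> * (secant \<circ> linepath (0, \<eta>) (0, 2*pi - \<eta>)) u \<notin> \<real>\<^sub>\<le>\<^sub>0"
proof -
  have "0 \<le> u * (2*pi - 2*\<eta>)" "u * (2*pi - 2*\<eta>) \<le> 2*pi - 2*\<eta>"
    using assms \<eta> by (auto intro: mult_left_le_one_le)
  then have "- \<i> * (g (\<eta> + u * (2*pi - 2*\<eta>)) - g 0) \<notin> \<real>\<^sub>\<le>\<^sub>0"
    using \<eta>(1) by (intro chord_from_bottom_avoids_ray) auto
  then show ?thesis by (simp add: secant_def linepath_def algebra_simps)
qed

lemma across_edge_avoids_ray:
  assumes "u \<in> {0..1}"
  shows "- 1 * (secant \<circ> linepath (0, 2*pi - \<eta>) (\<eta>, 2*pi - \<eta>)) u \<notin> \<real>\<^sub>\<le>\<^sub>0"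
proof -
  have "(secant \<circ> linepath (0, 2*pi - \<eta>) (\<eta>, 2*pi - \<eta>)) u = g (u * \<eta> - \<eta>) - g (u * \<eta>)"
    using periodic[of "u * \<eta> - \<eta>"] by (simp add: secant_def linepath_def algebra_simps)
  moreover have "Re (g (u * \<eta> - \<eta>)) < Re (g (u * \<eta>))"
    using assms \<eta> by (intro increasing) (auto simp: mult_left_le_one_le)
  ultimately show ?thesis by (auto simp: complex_nonpos_Reals_iff)
qed

lemma winding_chord_edge_plus_across_edge:
  "winding_number (secant \<circ> linepath (0, \<eta>) (0, 2*pi - \<eta>)) 0
     + winding_number (secant \<circ> linepath (0, 2*pi - \<eta>) (\<eta>, 2*pi - \<eta>)) 0 = 1/2"
proof -
  define X0 where "X0 = g \<eta> - g 0"
  define X1 where "X1 = g (-\<eta>) - g 0"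
  have Re_X: "0 < Re X0" "0 < Re (- X1)"
    using increasing[of 0 \<eta>] increasing[of "-\<eta>" 0] \<eta>(1) by (simp_all add: X0_def X1_def)
  have endpoints: "secant (0, \<eta>) = X0" "secant (0, 2*pi - \<eta>) = X1" "secant (\<eta>, 2*pi - \<eta>) = - X0"
    using periodic[of "-\<eta>"] periodic[of 0] by (simp_all add: secant_def X0_def X1_def)
  have "winding_number (secant \<circ> linepath (0, \<eta>) (0, 2*pi - \<eta>)) 0
      = (Ln (- \<i> * pathfinish (secant \<circ> linepath (0, \<eta>) (0, 2*pi - \<eta>)))
        - Ln (- \<i> * pathstart (secant \<circ> linepath (0, \<eta>) (0, 2*pi - \<eta>)))) / (2 * of_real pi * \<i>)"
    by (rule winding_number_avoiding_ray[OF path_secant_linepath _ chord_edge_avoids_ray]) simp_all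
  moreover have "winding_number (secant \<circ> linepath (0, 2*pi - \<eta>) (\<eta>, 2*pi - \<eta>)) 0
      = (Ln (- 1 * pathfinish (secant \<circ> linepath (0, 2*pi - \<eta>) (\<eta>, 2*pi - \<eta>)))
        - Ln (- 1 * pathstart (secant \<circ> linepath (0, 2*pi - \<eta>) (\<eta>, 2*pi - \<eta>)))) / (2 * of_real pi * \<i>)"
    by (rule winding_number_avoiding_ray[OF path_secant_linepath _ across_edge_avoids_ray]) simp_all
  ultimately have W1: "winding_number (secant \<circ> linepath (0, \<eta>) (0, 2*pi - \<eta>)) 0
      = (Ln (- \<i> * X1) - Ln (- \<i> * X0)) / (2 * of_real pi * \<i>)"
    and W2: "winding_number (secant \<circ> linepath (0, 2*pi - \<eta>) (\<eta>, 2*pi - \<eta>)) 0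
      = (Ln X0 - Ln (- X1)) / (2 * of_real pi * \<i>)"
    using endpoints by (simp_all add: pathstart_compose pathfinish_compose)
  have "Ln (- \<i> * X1) = Ln (- X1) + \<i> * of_real pi / 2" "Ln (- \<i> * X0) = Ln X0 - \<i> * of_real pi / 2"
    using Ln_times_ii_Re_pos[OF Re_X(2)] Ln_times_minus_ii_Re_pos[OF Re_X(1)] by simp_all
  note Ln_values = this
  show ?thesis unfolding W1 W2 Ln_values by (simp add: field_simps)
qed

lemma winding_secant_loop: "winding_number (\<lambda>u. g (2*pi*u + \<eta>) - g (2*pi*u)) 0 = 1"
proof -
  define p1 where "p1 = linepath (0::real, \<eta>) (0, 2*pi - \<eta>)"
  define p2 where "p2 = linepath (0::real, 2*pi - \<eta>) (\<eta>, 2*pi - \<eta>)"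
  define p3 where "p3 = linepath (\<eta>, 2*pi - \<eta>) (2*pi - \<eta>, \<eta>)"
  define p4 where "p4 = linepath (2*pi - \<eta>, \<eta>) (2*pi, \<eta>)"
  define S where "S = (UNIV::real set) \<times> {0<..<2*pi}"
  have seg: "closed_segment x y \<subseteq> S" if "x \<in> S" "y \<in> S" for x y
    using that unfolding S_def by (intro closed_segment_subset convex_Times) auto
  have "(a, \<eta>) \<in> S" "(a, 2*pi - \<eta>) \<in> S" for a
    using \<eta> by (auto simp: S_def)
  then have in_strip: "path_image (linepath (0, \<eta>) (2*pi, \<eta>)) \<subseteq> S"
    "path_image p1 \<subseteq> S" "path_image p2 \<subseteq> S" "path_image p3 \<subseteq> S" "path_image p4 \<subseteq> S"
    unfolding p1_def p2_def p3_def p4_def by (simp_all add: seg)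
  then have nonzero: "0 \<notin> path_image (secant \<circ> p1)" "0 \<notin> path_image (secant \<circ> p2)"
    "0 \<notin> path_image (secant \<circ> p3)" "0 \<notin> path_image (secant \<circ> p4)"
    unfolding path_image_compose S_def using secant_nonzero by auto
  have paths: "path (secant \<circ> p1)" "path (secant \<circ> p2)" "path (secant \<circ> p3)" "path (secant \<circ> p4)"
    unfolding p1_def p2_def p3_def p4_def by (rule path_secant_linepath)+
  have "p3 u = (fst (p1 u) + snd (p1 u), 2*pi - snd (p1 u))"
    "p4 u = (fst (p2 u) + snd (p2 u), 2*pi - snd (p2 u))" for u
    by (simp_all add: p1_def p2_def p3_def p4_def linepath_def algebra_simps)
  then have reflect: "secant \<circ> p3 = (\<lambda>u. - (secant \<circ> p1) u)" "secant \<circ> p4 = (\<lambda>u. - (secant \<circ> p2) u)"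
    using secant_reflect by (simp_all add: fun_eq_iff)
  have "winding_number (secant \<circ> linepath (0, \<eta>) (2*pi, \<eta>)) 0
      = winding_number (secant \<circ> (p1 +++ p2 +++ p3 +++ p4)) 0"
    using in_strip unfolding S_def
    by (intro winding_secant_strip_paths_eq subset_path_image_join) (simp_all add: p1_def p2_def p3_def p4_def)
  also have "\<dots> = winding_number (secant \<circ> p1) 0 + winding_number (secant \<circ> p2) 0
      + winding_number (secant \<circ> p3) 0 + winding_number (secant \<circ> p4) 0"
    using nonzero paths unfolding path_compose_join
    by (simp add: winding_number_join not_in_path_image_join
        pathfinish_compose pathstart_compose p1_def p2_def p3_def p4_def)
  also have "\<dots> = 2 * (winding_number (secant \<circ> p1) 0 + winding_number (secant \<circ> p2) 0)"
  proof -
    have "winding_number (\<lambda>u. - (secant \<circ> p1) u) 0 = winding_number (secant \<circ> p1) 0"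
      unfolding p1_def
      by (rule winding_number_uminus_avoiding_ray[OF path_secant_linepath _ chord_edge_avoids_ray]) simp_all
    moreover have "winding_number (\<lambda>u. - (secant \<circ> p2) u) 0 = winding_number (secant \<circ> p2) 0"
      unfolding p2_def
      by (rule winding_number_uminus_avoiding_ray[OF path_secant_linepath _ across_edge_avoids_ray]) simp_all
    ultimately show ?thesis unfolding reflect by simp
  qed
  also have "\<dots> = 1"
    unfolding p1_def p2_def winding_chord_edge_plus_across_edge by simp
  finally show ?thesis
    by (simp add: secant_def linepath_def comp_def algebra_simps)
qed

end

lemma winding_tangent_if_Re_pos:
  assumes "Re (g' 0) > 0"
  shows "winding_number (\<lambda>u. g' (2*pi*u)) 0 = 1"
proof -
  obtain \<eta>1 where "\<eta>1 > 0"
    and increasing: "\<And>s t. -\<eta>1 \<le> s \<Longrightarrow> s < t \<Longrightarrow> t \<le> \<eta>1 \<Longrightarrow> Re (g s) < Re (g t)"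
    using Re_g_increasing_near_0[OF assms] by blast
  obtain \<eta>0 where "\<eta>0 > 0" and close: "\<And>\<eta> s. 0 < \<eta> \<Longrightarrow> \<eta> \<le> \<eta>0 \<Longrightarrow> s \<in> {0..2*pi} \<Longrightarrow>
      norm (g (s + \<eta>) - g s - of_real \<eta> * g' s) < norm (of_real \<eta> * g' s)"
    using secant_approximates_tangent by blast
  define \<eta> where "\<eta> = min (min \<eta>0 \<eta>1) (1/2)"
  have \<eta>: "0 < \<eta>" "\<eta> \<le> \<eta>0" "\<eta> \<le> \<eta>1" "\<eta> < 1" "\<eta> < pi"
    using \<open>\<eta>0 > 0\<close> \<open>\<eta>1 > 0\<close> pi_gt3 by (auto simp: \<eta>_def)
  have "winding_number (\<lambda>u. g' (2*pi*u)) 0 = winding_number (\<lambda>u. g (2*pi*u + \<eta>) - g (2*pi*u)) 0"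
    using \<eta> close by (intro winding_tangent_eq_winding_secant) auto
  also have "\<dots> = 1"
    using \<eta> increasing by (intro winding_secant_loop) auto
  finally show ?thesis .
qed

context
  fixes \<delta> \<epsilon> :: real
  assumes \<delta>: "0 < \<delta>" "\<delta> < pi"
    and decreasing: "\<And>s t. -\<delta> \<le> s \<Longrightarrow> s < t \<Longrightarrow> t \<le> \<delta> \<Longrightarrow> Re (g t) < Re (g s)"
    and \<epsilon>: "0 < \<epsilon>" "\<And>t. t \<in> {\<delta>..2*pi-\<delta>} \<Longrightarrow> \<epsilon> < norm (g t - g 0)"
begin

lemma near_bottom_avoids_ray:
  assumes "-\<delta> \<le> t" "t \<le> \<delta>"
  shows "\<i> * (g t - (g 0 + \<i> * of_real \<epsilon>)) \<notin> \<real>\<^sub>\<le>\<^sub>0"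
proof (cases "t = 0")
  case True
  then show ?thesis using \<epsilon>(1) by (simp add: complex_nonpos_Reals_iff)
next
  case False
  then have "Re (g t) \<noteq> Re (g 0)"
    using assms decreasing[of t 0] decreasing[of 0 t] \<delta>(1) by (cases "t < 0") auto
  then show ?thesis by (simp add: complex_nonpos_Reals_iff)
qed

lemma away_from_bottom_avoids_ray:
  assumes "\<delta> \<le> t" "t \<le> 2*pi - \<delta>"
  shows "- \<i> * (g t - (g 0 + \<i> * of_real \<epsilon>)) \<notin> \<real>\<^sub>\<le>\<^sub>0"
proof
  assume "- \<i> * (g t - (g 0 + \<i> * of_real \<epsilon>)) \<in> \<real>\<^sub>\<le>\<^sub>0"
  then have "Re (g t - g 0) = 0" "Im (g t - g 0) \<le> \<epsilon>"
    by (auto simp: complex_nonpos_Reals_iff)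
  moreover have "Im (g t - g 0) \<ge> 0" using bottom[of t] by simp
  ultimately have "norm (g t - g 0) \<le> \<epsilon>" by (simp add: cmod_eq_Im)
  then show False using \<epsilon>(2)[of t] assms by simp
qed

lemma g_ne_point_above_bottom:
  assumes "t \<in> {0..2*pi}"
  shows "g t \<noteq> g 0 + \<i> * of_real \<epsilon>"
proof -
  consider "t \<le> \<delta>" | "\<delta> \<le> t" "t \<le> 2*pi - \<delta>" | "2*pi - \<delta> \<le> t" by linarith
  then show ?thesis
  proof cases
    case 1
    then show ?thesis using near_bottom_avoids_ray[of t] assms \<delta>(1) by auto
  next
    case 2
    then show ?thesis using away_from_bottom_avoids_ray[of t] by auto
  next
    case 3
    then show ?thesis
      using near_bottom_avoids_ray[of "t - 2*pi"] periodic[of "t - 2*pi"] assms by auto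
  qed
qed

lemma point_above_bottom_notin_path_image:
  "g 0 + \<i> * of_real \<epsilon> \<notin> path_image (\<lambda>u. g (2*pi*u))"
proof
  assume "g 0 + \<i> * of_real \<epsilon> \<in> path_image (\<lambda>u. g (2*pi*u))"
  then obtain u where "u \<in> {0..1}" "g (2*pi*u) = g 0 + \<i> * of_real \<epsilon>"
    by (auto simp: path_image_def)
  then show False using g_ne_point_above_bottom[of "2*pi*u"] by auto
qed

lemma winding_point_above_bottom:
  "winding_number (\<lambda>u. g (2*pi*u)) (g 0 + \<i> * of_real \<epsilon>) = -1"
proof -
  define G where "G = (\<lambda>t. g t - (g 0 + \<i> * of_real \<epsilon>))"
  define q1 where "q1 = linepath (0::real) \<delta>"
  define q2 where "q2 = linepath \<delta> (2*pi - \<delta>)"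
  define q3 where "q3 = linepath (2*pi - \<delta>) (2*pi)"
  have G_cont: "continuous_on T G" for T
    unfolding G_def by (intro continuous_intros continuous_on_g)
  have G_nonzero: "G t \<noteq> 0" if "t \<in> {0..2*pi}" for t
    using g_ne_point_above_bottom[OF that] by (simp add: G_def)
  have paths: "path (G \<circ> q1)" "path (G \<circ> q2)" "path (G \<circ> q3)"
    unfolding q1_def q2_def q3_def by (auto intro: path_continuous_image G_cont)
  have u\<delta>: "0 \<le> u * \<delta>" "u * \<delta> \<le> \<delta>" "0 \<le> u * (2*pi - 2*\<delta>)" "u * (2*pi - 2*\<delta>) \<le> 2*pi - 2*\<delta>"
    if "u \<in> {0..1}" for u
    using that \<delta> by (auto simp: mult_left_le_one_le)
  have pieces: "(G \<circ> q1) u = G (u * \<delta>)" "(G \<circ> q2) u = G (\<delta> + u * (2*pi - 2*\<delta>))"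
    "(G \<circ> q3) u = G (u * \<delta> - \<delta>)" for u
    using periodic[of "u * \<delta> - \<delta>"]
    by (simp_all add: G_def q1_def q2_def q3_def linepath_def algebra_simps)
  have ray1: "\<i> * (G \<circ> q1) u \<notin> \<real>\<^sub>\<le>\<^sub>0" if "u \<in> {0..1}" for u
    unfolding pieces unfolding G_def using u\<delta>[OF that] \<delta>(1) by (intro near_bottom_avoids_ray) auto
  have ray2: "- \<i> * (G \<circ> q2) u \<notin> \<real>\<^sub>\<le>\<^sub>0" if "u \<in> {0..1}" for u
    unfolding pieces unfolding G_def using u\<delta>[OF that] by (intro away_from_bottom_avoids_ray) auto
  have ray3: "\<i> * (G \<circ> q3) u \<notin> \<real>\<^sub>\<le>\<^sub>0" if "u \<in> {0..1}" for u
    unfolding pieces unfolding G_def using u\<delta>[OF that] by (intro near_bottom_avoids_ray) auto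
  have "G (2*pi - \<delta>) = G (-\<delta>)" "G (2*pi) = G 0"
    using periodic[of "-\<delta>"] periodic[of 0] by (simp_all add: G_def)
  moreover have "winding_number (G \<circ> q1) 0
      = (Ln (\<i> * pathfinish (G \<circ> q1)) - Ln (\<i> * pathstart (G \<circ> q1))) / (2 * of_real pi * \<i>)"
    by (rule winding_number_avoiding_ray[OF paths(1) _ ray1]) simp_all
  moreover have "winding_number (G \<circ> q2) 0
      = (Ln (- \<i> * pathfinish (G \<circ> q2)) - Ln (- \<i> * pathstart (G \<circ> q2))) / (2 * of_real pi * \<i>)"
    by (rule winding_number_avoiding_ray[OF paths(2) _ ray2]) simp_all
  moreover have "winding_number (G \<circ> q3) 0
      = (Ln (\<i> * pathfinish (G \<circ> q3)) - Ln (\<i> * pathstart (G \<circ> q3))) / (2 * of_real pi * \<i>)"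
    by (rule winding_number_avoiding_ray[OF paths(3) _ ray3]) simp_all
  ultimately have windings: "winding_number (G \<circ> q1) 0 + winding_number (G \<circ> q2) 0 + winding_number (G \<circ> q3) 0
      = (Ln (\<i> * G \<delta>) - Ln (\<i> * G 0)) / (2 * of_real pi * \<i>)
        + (Ln (- \<i> * G (-\<delta>)) - Ln (- \<i> * G \<delta>)) / (2 * of_real pi * \<i>)
        + (Ln (\<i> * G 0) - Ln (\<i> * G (-\<delta>))) / (2 * of_real pi * \<i>)"
    by (simp add: pathstart_compose pathfinish_compose q1_def q2_def q3_def)
  have Re_G: "0 < Re (- G \<delta>)" "0 < Re (G (-\<delta>))"
    using decreasing[of 0 \<delta>] decreasing[of "-\<delta>" 0] \<delta>(1) by (simp_all add: G_def)
  have "Ln (\<i> * G \<delta>) = Ln (- G \<delta>) - \<i> * of_real pi / 2"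
    "Ln (- \<i> * G \<delta>) = Ln (- G \<delta>) + \<i> * of_real pi / 2"
    "Ln (- \<i> * G (-\<delta>)) = Ln (G (-\<delta>)) - \<i> * of_real pi / 2"
    "Ln (\<i> * G (-\<delta>)) = Ln (G (-\<delta>)) + \<i> * of_real pi / 2"
    using Ln_times_minus_ii_Re_pos[OF Re_G(1)] Ln_times_ii_Re_pos[OF Re_G(1)]
      Ln_times_minus_ii_Re_pos[OF Re_G(2)] Ln_times_ii_Re_pos[OF Re_G(2)] by simp_all
  note Ln_values = this
  have "winding_number (\<lambda>u. g (2*pi*u)) (g 0 + \<i> * of_real \<epsilon>) = winding_number (G \<circ> linepath 0 (2*pi)) 0"
    by (simp add: winding_number_offset[of _ "g 0 + \<i> * of_real \<epsilon>"] G_def linepath_def comp_def mult.commute)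
  also have "\<dots> = winding_number (G \<circ> q1) 0 + winding_number (G \<circ> q2) 0 + winding_number (G \<circ> q3) 0"
  proof -
    have "winding_number (G \<circ> linepath 0 (2*pi)) 0
        = winding_number (G \<circ> q1) 0 + winding_number (G \<circ> linepath \<delta> (2*pi)) 0"
      unfolding q1_def using \<delta> G_nonzero by (intro winding_number_linepath_split G_cont) auto
    moreover have "winding_number (G \<circ> linepath \<delta> (2*pi)) 0
        = winding_number (G \<circ> q2) 0 + winding_number (G \<circ> q3) 0"
      unfolding q2_def q3_def using \<delta> G_nonzero by (intro winding_number_linepath_split G_cont) auto
    ultimately show ?thesis by simp
  qed
  also have "\<dots> = -1"
    unfolding windings Ln_values by (simp add: field_simps)
  finally show ?thesis .
qed

end

lemma winding_minus_one_if_Re_neg: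
  assumes "Re (g' 0) < 0"
  obtains z where "z \<notin> path_image (\<lambda>u. g (2*pi*u))" "winding_number (\<lambda>u. g (2*pi*u)) z = -1"
proof -
  obtain \<delta>1 where "\<delta>1 > 0"
    and decreasing: "\<And>s t. -\<delta>1 \<le> s \<Longrightarrow> s < t \<Longrightarrow> t \<le> \<delta>1 \<Longrightarrow> Re (g t) < Re (g s)"
    using Re_g_decreasing_near_0[OF assms] by blast
  define \<delta> where "\<delta> = min \<delta>1 1"
  have \<delta>: "0 < \<delta>" "\<delta> < pi" using \<open>\<delta>1 > 0\<close> pi_gt3 by (auto simp: \<delta>_def)
  have decreasing_\<delta>: "\<And>s t. -\<delta> \<le> s \<Longrightarrow> s < t \<Longrightarrow> t \<le> \<delta> \<Longrightarrow> Re (g t) < Re (g s)"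
    using decreasing by (force simp: \<delta>_def)
  have "\<exists>t0\<in>{\<delta>..2*pi-\<delta>}. \<forall>t\<in>{\<delta>..2*pi-\<delta>}. norm (g t0 - g 0) \<le> norm (g t - g 0)"
    using \<delta> by (intro continuous_attains_inf) (auto intro!: continuous_intros continuous_on_g)
  then obtain t0 where t0: "t0 \<in> {\<delta>..2*pi-\<delta>}"
    and nearest: "\<And>t. t \<in> {\<delta>..2*pi-\<delta>} \<Longrightarrow> norm (g t0 - g 0) \<le> norm (g t - g 0)"
    by blast
  have "g t0 \<noteq> g 0" using t0 \<delta> g_shift_ne[of t0 0] by auto
  define \<epsilon> where "\<epsilon> = norm (g t0 - g 0) / 2"
  have "0 < norm (g t0 - g 0)" using \<open>g t0 \<noteq> g 0\<close> by simp
  then have "0 < \<epsilon>" by (simp add: \<epsilon>_def)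
  have "\<epsilon> < norm (g t - g 0)" if "t \<in> {\<delta>..2*pi-\<delta>}" for t
    using nearest[OF that] \<open>0 < norm (g t0 - g 0)\<close> unfolding \<epsilon>_def by linarith
  note \<epsilon> = \<open>0 < \<epsilon>\<close> this
  show thesis
    using that point_above_bottom_notin_path_image[OF \<delta> decreasing_\<delta> \<epsilon>]
      winding_point_above_bottom[OF \<delta> decreasing_\<delta> \<epsilon>]
    by blast
qed

lemma winding_tangent_eq_one:
  assumes "\<And>z. z \<notin> path_image (\<lambda>u. g (2*pi*u)) \<Longrightarrow> winding_number (\<lambda>u. g (2*pi*u)) z \<noteq> -1"
  shows "winding_number (\<lambda>u. g' (2*pi*u)) 0 = 1"
proof (cases "Re (g' 0) > 0")
  case True
  then show ?thesis by (rule winding_tangent_if_Re_pos)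
next
  case False
  then have "Re (g' 0) < 0" using Re_g'_0_nonzero by linarith
  then show ?thesis using winding_minus_one_if_Re_neg assms by metis
qed

end

lemma periodic_loop_shift:
  fixes F :: "real \<Rightarrow> complex"
  assumes "continuous_on UNIV F" "\<And>x. F (x + 2*pi) = F x" "b \<in> {0..2*pi}"
  shows "path_image (\<lambda>u. F (b + 2*pi*u)) = path_image (\<lambda>u. F (2*pi*u))"
    and "z \<notin> path_image (\<lambda>u. F (2*pi*u)) \<Longrightarrow>
      winding_number (\<lambda>u. F (b + 2*pi*u)) z = winding_number (\<lambda>u. F (2*pi*u)) z"
proof -
  define a where "a = b / (2*pi)"
  have a: "a \<in> {0..1}" using assms(3) by (auto simp: a_def field_simps)
  have shift: "shiftpath a (\<lambda>u. F (2*pi*u)) u = F (b + 2*pi*u)" if "u \<in> {0..1}" for u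
  proof (cases "a + u \<le> 1")
    case True
    then show ?thesis by (simp add: shiftpath_def a_def algebra_simps)
  next
    case False
    have "F (2*pi*(a + u - 1)) = F (2*pi*(a + u - 1) + 2*pi)" using assms(2) by simp
    also have "2*pi*(a + u - 1) + 2*pi = b + 2*pi*u" by (simp add: a_def algebra_simps)
    finally show ?thesis using False by (simp add: shiftpath_def)
  qed
  have "path (\<lambda>u. F (2*pi*u))"
    unfolding path_def by (intro continuous_on_compose2[OF assms(1)] continuous_intros) auto
  moreover have loop: "pathfinish (\<lambda>u. F (2*pi*u)) = pathstart (\<lambda>u. F (2*pi*u))"
    using assms(2)[of 0] by (simp add: pathfinish_def pathstart_def)
  moreover have "path_image (\<lambda>u. F (b + 2*pi*u)) = path_image (shiftpath a (\<lambda>u. F (2*pi*u)))"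
    unfolding path_image_def by (intro image_cong) (simp_all add: shift)
  ultimately show "path_image (\<lambda>u. F (b + 2*pi*u)) = path_image (\<lambda>u. F (2*pi*u))"
    using path_image_shiftpath[OF a] by simp
  assume z: "z \<notin> path_image (\<lambda>u. F (2*pi*u))"
  have "winding_number (\<lambda>u. F (b + 2*pi*u)) z = winding_number (shiftpath a (\<lambda>u. F (2*pi*u))) z"
    by (rule winding_number_cong) (simp add: shift)
  also have "\<dots> = winding_number (\<lambda>u. F (2*pi*u)) z"
    by (rule winding_number_shiftpath) (use \<open>path _\<close> z loop a in auto)
  finally show "winding_number (\<lambda>u. F (b + 2*pi*u)) z = winding_number (\<lambda>u. F (2*pi*u)) z" .
qed

lemma periodic_lowest_point:
  fixes F :: "real \<Rightarrow> complex"
  assumes "continuous_on UNIV F" "\<And>t. F (t + 2*pi) = F t"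
  obtains b where "b \<in> {0..2*pi}" "\<And>t. Im (F b) \<le> Im (F t)"
proof -
  have "\<exists>b\<in>{0..2*pi}. \<forall>t\<in>{0..2*pi}. Im (F b) \<le> Im (F t)"
    by (intro continuous_attains_inf) (auto intro!: continuous_intros continuous_on_subset[OF assms(1)])
  then obtain b where b: "b \<in> {0..2*pi}" and lowest: "\<And>t. t \<in> {0..2*pi} \<Longrightarrow> Im (F b) \<le> Im (F t)"
    by blast
  have "Im (F b) \<le> Im (F t)" for t
  proof -
    have "\<exists>y. 0 \<le> y \<and> y < 2*pi \<and> F t = F y"
      by (rule periodic_reduce[where F=F and p="2*pi" and a=0 and x=t]) (use assms(2) in auto)
    then show ?thesis using lowest by force
  qed
  with b show thesis by (rule that)
qed

lemma periodic_inj_on_eq_imp_period_multiple: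
  fixes F :: "real \<Rightarrow> 'a"
  assumes "\<And>x. F (x + p) = F x" "p > 0" "inj_on F {0..<p}" "F s = F t"
  shows "\<exists>n::int. s - t = of_int n * p"
proof -
  obtain s' m where s': "0 \<le> s'" "s' < 0 + p" "F s = F s'" "s = s' + of_int m * p"
    using periodic_reduce[where F=F and p=p, OF assms(1,2)] by metis
  obtain t' n where t': "0 \<le> t'" "t' < 0 + p" "F t = F t'" "t = t' + of_int n * p"
    using periodic_reduce[where F=F and p=p, OF assms(1,2)] by metis
  have "s' = t'" using assms(3,4) s' t' unfolding inj_on_def by auto
  then show ?thesis using s' t' by (intro exI[of _ "m - n"]) (simp add: algebra_simps)
qed

theorem winding_number_tangent_simple_loop:
  fixes \<gamma> \<gamma>' :: "real \<Rightarrow> complex"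
  assumes has_derivative: "\<And>t. (\<gamma> has_vector_derivative \<gamma>' t) (at t)"
    and continuous_derivative: "continuous_on UNIV \<gamma>'"
    and periodic: "\<And>t. \<gamma> (t + 2*pi) = \<gamma> t"
    and periodic_derivative: "\<And>t. \<gamma>' (t + 2*pi) = \<gamma>' t"
    and regular: "\<And>t. \<gamma>' t \<noteq> 0"
    and simple: "inj_on \<gamma> {0..<2*pi}"
    and positive: "\<And>z. z \<notin> path_image (\<lambda>u. \<gamma> (2*pi*u)) \<Longrightarrow> winding_number (\<lambda>u. \<gamma> (2*pi*u)) z \<noteq> -1"
  shows "winding_number (\<lambda>u. \<gamma>' (2*pi*u)) 0 = 1"
proof -
  have continuous: "continuous_on UNIV \<gamma>"
    using has_derivative by (meson continuous_at_imp_continuous_on has_vector_derivative_continuous)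
  obtain b where b: "b \<in> {0..2*pi}" and lowest: "\<And>t. Im (\<gamma> b) \<le> Im (\<gamma> t)"
    using periodic_lowest_point[OF continuous periodic] by blast
  interpret shifted: bottom_based_loop "\<lambda>t. \<gamma> (b + t)" "\<lambda>t. \<gamma>' (b + t)"
  proof
    fix t
    have "((\<lambda>t. b + t) has_vector_derivative 1) (at t)"
      by (intro derivative_eq_intros) auto
    from vector_diff_chain_at[OF this has_derivative[of "b + t"]]
    show "((\<lambda>t. \<gamma> (b + t)) has_vector_derivative \<gamma>' (b + t)) (at t)"
      by (simp add: o_def)
  next
    show "continuous_on UNIV (\<lambda>t. \<gamma>' (b + t))"
      by (intro continuous_on_compose2[OF continuous_derivative] continuous_intros) auto
  next
    fix t
    show "\<gamma> (b + (t + 2*pi)) = \<gamma> (b + t)" "\<gamma>' (b + (t + 2*pi)) = \<gamma>' (b + t)"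
      using periodic[of "b + t"] periodic_derivative[of "b + t"] by (simp_all add: add.assoc)
    show "\<gamma>' (b + t) \<noteq> 0" by (rule regular)
    show "Im (\<gamma> (b + 0)) \<le> Im (\<gamma> (b + t))" using lowest by simp
  next
    fix s t assume "\<gamma> (b + s) = \<gamma> (b + t)"
    then obtain n :: int where "(b + s) - (b + t) = of_int n * (2*pi)"
      using periodic_inj_on_eq_imp_period_multiple[OF periodic _ simple] by force
    then show "\<exists>n::int. s - t = 2*pi*n" by (intro exI[of _ n]) simp
  qed
  have "winding_number (\<lambda>u. \<gamma>' (b + 2*pi*u)) 0 = 1"
  proof (rule shifted.winding_tangent_eq_one)
    fix z assume "z \<notin> path_image (\<lambda>u. \<gamma> (b + 2*pi*u))"
    then show "winding_number (\<lambda>u. \<gamma> (b + 2*pi*u)) z \<noteq> -1"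
      using positive periodic_loop_shift[OF continuous periodic b] by metis
  qed
  moreover have "0 \<notin> path_image (\<lambda>u. \<gamma>' (2*pi*u))"
    using regular by (auto simp: path_image_def)
  ultimately show ?thesis
    using periodic_loop_shift(2)[OF continuous_derivative periodic_derivative b] by metis
qed

lemma smooth_fun_derivatives:
  assumes "smooth_fun h"
  shows "(h has_real_derivative deriv h x) (at x)"
    and "(deriv h has_real_derivative deriv (deriv h) x) (at x)"
    and "isCont (deriv (deriv h)) x"
proof -
  have "(deriv ^^ n) h differentiable (at x)" for n
    using assms unfolding smooth_fun_def by blast
  from this[of 0] this[of 1] this[of 2] show
    "(h has_real_derivative deriv h x) (at x)"
    "(deriv h has_real_derivative deriv (deriv h) x) (at x)"
    "isCont (deriv (deriv h)) x"
    by (simp_all add: DERIV_deriv_iff_real_differentiable differentiable_imp_continuous_within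
        numeral_2_eq_2)
qed

lemma has_vector_derivative_polar:
  assumes "(a has_real_derivative a') (at x)" "(b has_real_derivative b') (at x)"
    and "(f has_real_derivative f') (at x)"
  shows "((\<lambda>x. (of_real (a x) + \<i> * of_real (b x)) * exp (\<i> * of_real (f x))) has_vector_derivative
     (of_real (a' - b x * f') + \<i> * of_real (b' + a x * f')) * exp (\<i> * of_real (f x))) (at x)"
proof -
  have "((\<lambda>x. \<i> * complex_of_real (f x)) has_vector_derivative \<i> * of_real f') (at x)"
    using has_vector_derivative_mult_right[OF has_vector_derivative_of_real[OF assms(3)]] .
  from field_vector_diff_chain_at[OF this, of exp]
  have "((\<lambda>x. exp (\<i> * of_real (f x))) has_vector_derivative
      \<i> * of_real f' * exp (\<i> * of_real (f x))) (at x)"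
    by (simp add: o_def DERIV_exp)
  moreover have "((\<lambda>x. of_real (a x) + \<i> * of_real (b x)) has_vector_derivative
      of_real a' + \<i> * of_real b') (at x)"
    using assms(1,2) by (intro has_vector_derivative_add has_vector_derivative_of_real
        has_vector_derivative_mult_right)
  ultimately show ?thesis
    using has_vector_derivative_mult by (fastforce simp: algebra_simps)
qed

definition curve_velocity :: "(real \<Rightarrow> real) \<Rightarrow> (real \<Rightarrow> real) \<Rightarrow> real \<Rightarrow> complex" where
  "curve_velocity \<rho> f \<beta> =
     (of_real (deriv \<rho> \<beta>) + \<i> * of_real (\<rho> \<beta> * deriv f \<beta>)) * exp (\<i> * of_real (f \<beta>))"

definition curve_acceleration :: "(real \<Rightarrow> real) \<Rightarrow> (real \<Rightarrow> real) \<Rightarrow> real \<Rightarrow> complex" where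
  "curve_acceleration \<rho> f \<beta> =
     (of_real (deriv (deriv \<rho>) \<beta> - \<rho> \<beta> * (deriv f \<beta>)\<^sup>2)
       + \<i> * of_real (2 * deriv \<rho> \<beta> * deriv f \<beta> + \<rho> \<beta> * deriv (deriv f) \<beta>))
     * exp (\<i> * of_real (f \<beta>))"

lemma turning_rate_identity:
  fixes r r1 r2 w w1 :: real
  assumes "r > 0" "r1 \<noteq> 0 \<or> w \<noteq> 0"
  shows "(w1 * (r1 / r) - w * ((r2 * r - r1\<^sup>2) / r\<^sup>2) + 2 * w * ((r1 / r)\<^sup>2 + w\<^sup>2)) / ((r1 / r)\<^sup>2 + w\<^sup>2)
    = Im (Complex (r2 - r * w\<^sup>2) (2 * r1 * w + r * w1) / Complex r1 (r * w)) + w"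
proof -
  define S where "S = r1\<^sup>2 + (r * w)\<^sup>2"
  have "S > 0" using assms by (auto simp: S_def sum_power2_gt_zero_iff)
  have "(r1 / r)\<^sup>2 + w\<^sup>2 = S / r\<^sup>2"
    using assms(1) unfolding S_def by (simp add: field_simps power2_eq_square)
  moreover have "w1 * (r1 / r) - w * ((r2 * r - r1\<^sup>2) / r\<^sup>2) = (r * r1 * w1 - w * (r2 * r - r1\<^sup>2)) / r\<^sup>2"
    using assms(1) by (simp add: field_simps power2_eq_square)
  ultimately have "(w1 * (r1 / r) - w * ((r2 * r - r1\<^sup>2) / r\<^sup>2) + 2 * w * ((r1 / r)\<^sup>2 + w\<^sup>2)) / ((r1 / r)\<^sup>2 + w\<^sup>2)
      = (r * r1 * w1 - w * (r2 * r - r1\<^sup>2)) / S + 2 * w"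
    using assms(1) \<open>S > 0\<close> by (simp add: field_simps)
  also have "\<dots> = ((2 * r1 * w + r * w1) * r1 - (r2 - r * w\<^sup>2) * (r * w)) / S + w"
    using \<open>S > 0\<close> unfolding S_def by (simp add: field_simps) (simp add: power2_eq_square algebra_simps)
  also have "\<dots> = Im (Complex (r2 - r * w\<^sup>2) (2 * r1 * w + r * w1) / Complex r1 (r * w)) + w"
    by (simp add: Im_divide S_def)
  finally show ?thesis .
qed

locale smooth_polar_loop =
  fixes \<rho> f :: "real \<Rightarrow> real" and k :: int
  assumes rho_smooth: "smooth_fun \<rho>"
    and rho_pos: "\<And>\<beta>. \<rho> \<beta> > 0"
    and rho_periodic: "\<And>\<beta>. \<rho> (\<beta> + 2*pi) = \<rho> \<beta>"
    and f_smooth: "smooth_fun f"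
    and f_periodic: "\<And>\<beta>. f (\<beta> + 2*pi) = f \<beta> + 2 * of_int k * pi"
begin

lemmas rho_derivatives = smooth_fun_derivatives[OF rho_smooth]
lemmas f_derivatives = smooth_fun_derivatives[OF f_smooth]

lemma has_vector_derivative_curve:
  "(curve \<rho> f has_vector_derivative curve_velocity \<rho> f \<beta>) (at \<beta>)"
proof -
  have "curve \<rho> f = (\<lambda>x. (of_real (\<rho> x) + \<i> * of_real ((\<lambda>x. 0) x)) * exp (\<i> * of_real (f x)))"
    by (simp add: curve_def fun_eq_iff)
  then show ?thesis
    using has_vector_derivative_polar[OF rho_derivatives(1) DERIV_const[of 0] f_derivatives(1)]
    by (simp add: curve_velocity_def)
qed

lemma has_vector_derivative_curve_velocity:
  "(curve_velocity \<rho> f has_vector_derivative curve_acceleration \<rho> f \<beta>) (at \<beta>)"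
proof -
  have "((\<lambda>x. \<rho> x * deriv f x) has_real_derivative
      deriv \<rho> \<beta> * deriv f \<beta> + \<rho> \<beta> * deriv (deriv f) \<beta>) (at \<beta>)"
    using DERIV_mult[OF rho_derivatives(1) f_derivatives(2)] by (simp add: algebra_simps)
  from has_vector_derivative_polar[OF rho_derivatives(2) this f_derivatives(1)]
  show ?thesis
    unfolding curve_velocity_def[abs_def] curve_acceleration_def
    by (simp add: power2_eq_square algebra_simps)
qed

lemma continuous_on_curve: "continuous_on UNIV (curve \<rho> f)"
  using has_vector_derivative_curve
  by (meson continuous_at_imp_continuous_on has_vector_derivative_continuous)

lemma continuous_on_curve_velocity: "continuous_on UNIV (curve_velocity \<rho> f)"
  using has_vector_derivative_curve_velocity
  by (meson continuous_at_imp_continuous_on has_vector_derivative_continuous)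

lemma continuous_on_curve_acceleration: "continuous_on UNIV (curve_acceleration \<rho> f)"
proof -
  have "continuous_on UNIV \<rho>" "continuous_on UNIV (deriv \<rho>)" "continuous_on UNIV (deriv (deriv \<rho>))"
    "continuous_on UNIV f" "continuous_on UNIV (deriv f)" "continuous_on UNIV (deriv (deriv f))"
    using DERIV_isCont[OF rho_derivatives(1)] DERIV_isCont[OF rho_derivatives(2)] rho_derivatives(3)
      DERIV_isCont[OF f_derivatives(1)] DERIV_isCont[OF f_derivatives(2)] f_derivatives(3)
    by (simp_all add: continuous_at_imp_continuous_on)
  note continuous = this
  show ?thesis
    unfolding curve_acceleration_def[abs_def]
    by (intro continuous_intros continuous_on_compose2[OF continuous(4)] continuous) auto
qed

lemma exp_f_periodic: "exp (\<i> * of_real (f (\<beta> + 2*pi))) = exp (\<i> * of_real (f \<beta>))"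
proof -
  have "\<i> * of_real (f (\<beta> + 2*pi)) = \<i> * of_real (f \<beta>) + \<i> * (of_int k * (of_real pi * 2))"
    unfolding f_periodic by (simp add: algebra_simps)
  then show ?thesis by (simp only: exp_plus_2pin)
qed

lemma curve_periodic: "curve \<rho> f (\<beta> + 2*pi) = curve \<rho> f \<beta>"
  using exp_f_periodic rho_periodic by (simp add: curve_def)

lemma curve_velocity_periodic: "curve_velocity \<rho> f (\<beta> + 2*pi) = curve_velocity \<rho> f \<beta>"
proof -
  have "deriv \<rho> (\<beta> + 2*pi) = deriv \<rho> \<beta>"
    using rho_periodic rho_derivatives(1) real_differentiable_def
    by (intro deriv_shift_quasiperiodic[of \<rho> "2*pi" 0]) auto
  moreover have "deriv f (\<beta> + 2*pi) = deriv f \<beta>"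
    using f_periodic f_derivatives(1) real_differentiable_def
    by (intro deriv_shift_quasiperiodic[of f "2*pi" "2 * of_int k * pi"]) auto
  ultimately show ?thesis
    using exp_f_periodic rho_periodic by (simp add: curve_velocity_def)
qed

lemma speed_eq_turning_rate:
  assumes "curve_velocity \<rho> f \<beta> \<noteq> 0" "c \<noteq> 0"
    and "let v = (\<lambda>x. deriv \<rho> x / \<rho> x); w = deriv f in
      (deriv w \<beta> * v \<beta> - w \<beta> * deriv v \<beta> + 2 * w \<beta> * ((v \<beta>)\<^sup>2 + (w \<beta>)\<^sup>2))
        / ((v \<beta>)\<^sup>2 + (w \<beta>)\<^sup>2) powr (3/2) = c"
  shows "sqrt ((deriv \<rho> \<beta> / \<rho> \<beta>)\<^sup>2 + (deriv f \<beta>)\<^sup>2)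
    = (Im (curve_acceleration \<rho> f \<beta> / curve_velocity \<rho> f \<beta>) + deriv f \<beta>) / c"
proof -
  define r where "r = \<rho> \<beta>"
  define r1 where "r1 = deriv \<rho> \<beta>"
  define r2 where "r2 = deriv (deriv \<rho>) \<beta>"
  define w where "w = deriv f \<beta>"
  define w1 where "w1 = deriv (deriv f) \<beta>"
  define Q where "Q = (r1 / r)\<^sup>2 + w\<^sup>2"
  define N where "N = w1 * (r1 / r) - w * ((r2 * r - r1\<^sup>2) / r\<^sup>2) + 2 * w * Q"
  have "r > 0" using rho_pos by (simp add: r_def)
  have velocity: "curve_velocity \<rho> f \<beta> = Complex r1 (r * w) * exp (\<i> * of_real (f \<beta>))"
    by (simp add: curve_velocity_def complex_eq_iff r_def r1_def w_def)
  then have "Complex r1 (r * w) \<noteq> 0" using assms(1) by auto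
  then have "r1 \<noteq> 0 \<or> w \<noteq> 0" by (auto simp: complex_eq_iff)
  then have "Q > 0" using \<open>r > 0\<close> by (auto simp: Q_def sum_power2_gt_zero_iff)
  have "Q powr (3/2) = Q powr (1 + 1/2)" by simp
  also have "\<dots> = Q powr 1 * Q powr (1/2)" by (rule powr_add)
  finally have Q_powr: "Q powr (3/2) = Q * sqrt Q"
    using \<open>Q > 0\<close> by (simp add: powr_half_sqrt)
  have "((\<lambda>x. deriv \<rho> x / \<rho> x) has_real_derivative (r2 * r - r1 * r1) / (r * r)) (at \<beta>)"
    using DERIV_divide[OF rho_derivatives(2) rho_derivatives(1)] \<open>r > 0\<close>
    by (simp add: r_def r1_def r2_def)
  then have "deriv (\<lambda>x. deriv \<rho> x / \<rho> x) \<beta> = (r2 * r - r1\<^sup>2) / r\<^sup>2"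
    by (simp add: DERIV_imp_deriv power2_eq_square)
  then have "N / Q powr (3/2) = c"
    using assms(3) by (simp add: Let_def N_def Q_def r_def r1_def r2_def w_def w1_def)
  then have "N / Q = c * sqrt Q"
    using \<open>Q > 0\<close> unfolding Q_powr by (simp add: field_simps)
  moreover have "N / Q = Im (Complex (r2 - r * w\<^sup>2) (2 * r1 * w + r * w1) / Complex r1 (r * w)) + w"
    unfolding N_def Q_def by (rule turning_rate_identity[OF \<open>r > 0\<close> \<open>r1 \<noteq> 0 \<or> w \<noteq> 0\<close>])
  moreover have "curve_acceleration \<rho> f \<beta>
      = Complex (r2 - r * w\<^sup>2) (2 * r1 * w + r * w1) * exp (\<i> * of_real (f \<beta>))"
    by (simp add: curve_acceleration_def complex_eq_iff r_def r1_def r2_def w_def w1_def)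
  then have "curve_acceleration \<rho> f \<beta> / curve_velocity \<rho> f \<beta>
      = Complex (r2 - r * w\<^sup>2) (2 * r1 * w + r * w1) / Complex r1 (r * w)"
    unfolding velocity by (simp add: mult_divide_mult_cancel_right)
  ultimately have "c * sqrt Q = Im (curve_acceleration \<rho> f \<beta> / curve_velocity \<rho> f \<beta>) + w"
    by simp
  then show ?thesis
    using assms(2) unfolding Q_def r_def r1_def w_def by (simp add: eq_divide_eq mult.commute)
qed

lemma turning_rate_has_integral:
  assumes "\<And>\<beta>. curve_velocity \<rho> f \<beta> \<noteq> 0"
    and "winding_number (\<lambda>u. curve_velocity \<rho> f (2*pi*u)) 0 = 1"
  shows "((\<lambda>\<beta>. Im (curve_acceleration \<rho> f \<beta> / curve_velocity \<rho> f \<beta>) + deriv f \<beta>)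
    has_integral 2 * (of_int k + 1) * pi) {0..2*pi}"
proof -
  have "((\<lambda>\<beta>. curve_acceleration \<rho> f \<beta> / curve_velocity \<rho> f \<beta>) has_integral
      2 * of_real pi * \<i> * winding_number (curve_velocity \<rho> f \<circ> linepath 0 (2*pi)) 0) {0..2*pi}"
    using has_vector_derivative_curve_velocity continuous_on_curve_acceleration assms(1)
    by (intro log_derivative_has_integral_winding_number)
      (auto intro: has_vector_derivative_at_within continuous_on_subset)
  moreover have "curve_velocity \<rho> f \<circ> linepath 0 (2*pi) = (\<lambda>u. curve_velocity \<rho> f (2*pi*u))"
    by (simp add: linepath_def comp_def mult.commute)
  ultimately have "((\<lambda>\<beta>. curve_acceleration \<rho> f \<beta> / curve_velocity \<rho> f \<beta>) has_integral
      2 * of_real pi * \<i>) {0..2*pi}"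
    using assms(2) by simp
  from has_integral_Im[OF this]
  have turning: "((\<lambda>\<beta>. Im (curve_acceleration \<rho> f \<beta> / curve_velocity \<rho> f \<beta>)) has_integral 2 * pi)
      {0..2*pi}"
    by simp
  have "(deriv f has_integral f (2*pi) - f 0) {0..2*pi}"
    using f_derivatives(1)
    by (intro fundamental_theorem_of_calculus)
      (auto simp: has_real_derivative_iff_has_vector_derivative intro: has_vector_derivative_at_within)
  from has_integral_add[OF turning this]
  show ?thesis
    using f_periodic[of 0] by (simp add: algebra_simps)
qed

end

theorem mainTheorem11:
  fixes \<rho> f :: "real \<Rightarrow> real" and k :: int and c :: real
  assumes rho_smooth: "smooth_fun \<rho>"
    and rho_pos: "\<And>\<beta>. \<rho> \<beta> > 0"
    and rho_per: "\<And>\<beta>. \<rho> (\<beta> + 2*pi) = \<rho> \<beta>"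
    and f_smooth: "smooth_fun f"
    and f_per: "\<And>\<beta>. f (\<beta> + 2*pi) = f \<beta> + 2 * of_int k * pi"
    and regular: "\<And>\<beta>. vector_derivative (curve \<rho> f) (at \<beta>) \<noteq> 0"
    and simple: "inj_on (curve \<rho> f) {0..<2*pi}"
    and ccw: "counterclockwise (curve_path \<rho> f)"
    and hstat: "ham_stationary (twisted_torus \<rho> f)"
    and c_nz: "c \<noteq> 0"
    and c_eq: "\<And>\<beta>. let v = (\<lambda>x. deriv \<rho> x / \<rho> x); w = deriv f in
        (deriv w \<beta> * v \<beta> - w \<beta> * deriv v \<beta> + 2 * w \<beta> * ((v \<beta>)\<^sup>2 + (w \<beta>)\<^sup>2))
          / ((v \<beta>)\<^sup>2 + (w \<beta>)\<^sup>2) powr (3/2) = c"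
  shows "integral {0..2*pi} (\<lambda>\<beta>. sqrt ((deriv \<rho> \<beta> / \<rho> \<beta>)\<^sup>2 + (deriv f \<beta>)\<^sup>2))
           = 2 * (of_int k + 1) * pi / c"
proof -
  interpret smooth_polar_loop \<rho> f k
    using rho_smooth rho_pos rho_per f_smooth f_per by unfold_locales
  have velocity_nonzero: "curve_velocity \<rho> f \<beta> \<noteq> 0" for \<beta>
    using regular[of \<beta>] vector_derivative_at[OF has_vector_derivative_curve] by simp
  have "path (curve_path \<rho> f)" "pathfinish (curve_path \<rho> f) = pathstart (curve_path \<rho> f)"
    using curve_periodic[of 0] unfolding curve_path_def path_def pathfinish_def pathstart_def
    by (auto intro: continuous_on_compose2[OF continuous_on_curve] continuous_intros)
  then have "winding_number (\<lambda>u. curve_velocity \<rho> f (2*pi*u)) 0 = 1"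
    using counterclockwise_winding_number_ne_minus_one[OF _ _ ccw]
    by (intro winding_number_tangent_simple_loop[OF has_vector_derivative_curve
          continuous_on_curve_velocity curve_periodic curve_velocity_periodic velocity_nonzero simple])
      (simp add: curve_path_def[abs_def])
  then have "((\<lambda>\<beta>. Im (curve_acceleration \<rho> f \<beta> / curve_velocity \<rho> f \<beta>) + deriv f \<beta>)
      has_integral 2 * (of_int k + 1) * pi) {0..2*pi}"
    by (rule turning_rate_has_integral[OF velocity_nonzero])
  from has_integral_mult_right[OF this, of "1/c"]
  have "((\<lambda>\<beta>. sqrt ((deriv \<rho> \<beta> / \<rho> \<beta>)\<^sup>2 + (deriv f \<beta>)\<^sup>2)) has_integral 2 * (of_int k + 1) * pi / c)
      {0..2*pi}"
    using speed_eq_turning_rate[OF velocity_nonzero c_nz c_eq] by simp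
  then show ?thesis by (rule integral_unique)
qed

end
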